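(* Let $F\langle X\rangle$ be an MN-algebra and let $A$ be a PI-algebra. If the completion $C\left(F\langle X\rangle/Id(A)\right)$ of the quotient normed algebra $F\langle X\rangle/Id(A)$ (with the quotient norm $\|f+Id(A)\|=\inf\{\|f+g\|: g\in Id(A)\}$) is nil, then $A$ is nilpotent.
   Context: All algebras are non-unitary associative over $F\in\{\mathbb{R},\mathbb{C}\}$. A normed algebra has a norm with $\|ab\|\le\|a\|\|b\|$; $C(B)$ denotes its completion. $F\langle X\rangle$ is the free non-unitary associative algebra over $F$ on $X=\{x_1,x_2,\dots\}$. For $f=f(x_1,\dots,x_n)$, $f^{(d_1,\dots,d_n)}$ denotes its multihomogeneous component of multidegree $(d_1,\dots,d_n)$ (the sum of terms whose monomials contain each $x_i$ exactly $d_i$ times). A norm on $F\langle X\rangle$ is multihomogeneous if $\|f^{(d_1,\dots,d_n)}\|\le\|f\|$ for all $f$ and all multidegrees; $F\langle X\rangle$ is an MN-algebra if it is a normed algebra for a multihomogeneous norm. $Id(A)$ is the set of polynomial identities of $A$ (polynomials $f$ with $f(a_1,\dots,a_m)=0$ for all $a_i\in A$); $A$ is PI if $Id(A)\ne\{0\}$. In this setting $Id(A)$ is a closed ideal so the quotient norm makes $F\langle X\rangle/Id(A)$ a normed algebra. Nil: every element nilpotent; nilpotent: all products of some fixed length $n$ vanish. *)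

theory Defs
  imports Complex_Main
begin

text \<open>An algebra A is a type of class ring (Isabelle's ring class is associative
  and non-unitary) together with a scalar multiplication.\<close>

definition is_algebra :: "('k::field \<Rightarrow> 'a::ring \<Rightarrow> 'a) \<Rightarrow> bool" where
  "is_algebra smul \<longleftrightarrow>
     (\<forall>c x y. smul c (x + y) = smul c x + smul c y) \<and>
     (\<forall>c d x. smul (c + d) x = smul c x + smul d x) \<and>
     (\<forall>c d x. smul (c * d) x = smul c (smul d x)) \<and>
     (\<forall>x. smul 1 x = x) \<and>
     (\<forall>c x y. smul c (x * y) = smul c x * y) \<and>
     (\<forall>c x y. smul c (x * y) = x * smul c y)"

text \<open>Product of a nonempty list (no unit available).\<close>
fun nprod :: "'a::semigroup_mult list \<Rightarrow> 'a" where
  "nprod [] = undefined"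
| "nprod [x] = x"
| "nprod (x # y # xs) = x * nprod (y # xs)"

text \<open>A polynomial is a finitely supported function from words (lists of variable
  indices) to coefficients, with zero coefficient on the empty word.\<close>

definition FX :: "(nat list \<Rightarrow> 'k::zero) set" where
  "FX = {f. finite {w. f w \<noteq> 0} \<and> f [] = 0}"

definition padd :: "(nat list \<Rightarrow> 'k::plus) \<Rightarrow> (nat list \<Rightarrow> 'k) \<Rightarrow> (nat list \<Rightarrow> 'k)" where
  "padd f g = (\<lambda>w. f w + g w)"

definition psub :: "(nat list \<Rightarrow> 'k::minus) \<Rightarrow> (nat list \<Rightarrow> 'k) \<Rightarrow> (nat list \<Rightarrow> 'k)" where
  "psub f g = (\<lambda>w. f w - g w)"

definition pscale :: "'k::times \<Rightarrow> (nat list \<Rightarrow> 'k) \<Rightarrow> (nat list \<Rightarrow> 'k)" where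
  "pscale c f = (\<lambda>w. c * f w)"

text \<open>Multiplication: concatenation of monomials, extended bilinearly.\<close>
definition pmul :: "(nat list \<Rightarrow> 'k::comm_semiring_0) \<Rightarrow> (nat list \<Rightarrow> 'k) \<Rightarrow> (nat list \<Rightarrow> 'k)" where
  "pmul f g = (\<lambda>w. \<Sum>i\<le>length w. f (take i w) * g (drop i w))"

text \<open>Positive powers: ppow f k = f^(k+1).\<close>
fun ppow :: "(nat list \<Rightarrow> 'k::comm_semiring_0) \<Rightarrow> nat \<Rightarrow> (nat list \<Rightarrow> 'k)" where
  "ppow f 0 = f"
| "ppow f (Suc k) = pmul f (ppow f k)"

text \<open>Multihomogeneous component of multidegree d (d i = degree in x_i).\<close>
definition mhcomp :: "(nat \<Rightarrow> nat) \<Rightarrow> (nat list \<Rightarrow> 'k::zero) \<Rightarrow> (nat list \<Rightarrow> 'k)" where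
  "mhcomp d f = (\<lambda>w. if (\<forall>i. count_list w i = d i) then f w else 0)"

text \<open>N is a multihomogeneous algebra norm on F<X> (F<X> is an MN-algebra).\<close>
definition MN_norm :: "((nat list \<Rightarrow> 'k::real_normed_field) \<Rightarrow> real) \<Rightarrow> bool" where
  "MN_norm N \<longleftrightarrow>
     (\<forall>f\<in>FX. N f \<ge> 0) \<and>
     (\<forall>f\<in>FX. N f = 0 \<longleftrightarrow> f = (\<lambda>_. 0)) \<and>
     (\<forall>f\<in>FX. \<forall>g\<in>FX. N (padd f g) \<le> N f + N g) \<and>
     (\<forall>f\<in>FX. \<forall>c. N (pscale c f) = norm c * N f) \<and>
     (\<forall>f\<in>FX. \<forall>g\<in>FX. N (pmul f g) \<le> N f * N g) \<and>
     (\<forall>f\<in>FX. \<forall>d. N (mhcomp d f) \<le> N f)"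

definition peval :: "('k::field \<Rightarrow> 'a::ring \<Rightarrow> 'a) \<Rightarrow> (nat \<Rightarrow> 'a) \<Rightarrow> (nat list \<Rightarrow> 'k) \<Rightarrow> 'a" where
  "peval smul \<phi> f = (\<Sum>w\<in>{w. f w \<noteq> 0}. smul (f w) (nprod (map \<phi> w)))"

definition Id_alg :: "('k::field \<Rightarrow> 'a::ring \<Rightarrow> 'a) \<Rightarrow> (nat list \<Rightarrow> 'k) set" where
  "Id_alg smul = {f\<in>FX. \<forall>\<phi>. peval smul \<phi> f = 0}"

definition is_PI :: "('k::field \<Rightarrow> 'a::ring \<Rightarrow> 'a) \<Rightarrow> bool" where
  "is_PI smul \<longleftrightarrow> Id_alg smul \<noteq> {\<lambda>_. 0}"

definition qnorm :: "((nat list \<Rightarrow> 'k::real_normed_field) \<Rightarrow> real) \<Rightarrow> (nat list \<Rightarrow> 'k) set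
                     \<Rightarrow> (nat list \<Rightarrow> 'k) \<Rightarrow> real" where
  "qnorm N I f = (INF g\<in>I. N (padd f g))"

text \<open>The completion C(B) of B = F<X>/I is realised (standard construction) as
  Cauchy sequences in B modulo null sequences; products are computed
  termwise. So C(B) is nil iff for every Cauchy sequence (a n) in B there is a
  k \<ge> 1 with a_n^k \<rightarrow> 0 in B. Elements of B are represented by polynomials.\<close>
definition completion_nil :: "((nat list \<Rightarrow> 'k::real_normed_field) \<Rightarrow> real) \<Rightarrow> (nat list \<Rightarrow> 'k) set \<Rightarrow> bool" where
  "completion_nil N I \<longleftrightarrow>
     (\<forall>a :: nat \<Rightarrow> (nat list \<Rightarrow> 'k).
        (\<forall>n. a n \<in> FX) \<and>
        (\<forall>e>0. \<exists>M. \<forall>m\<ge>M. \<forall>n\<ge>M. qnorm N I (psub (a m) (a n)) < e)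
        \<longrightarrow> (\<exists>k. (\<lambda>n. qnorm N I (ppow (a n) k)) \<longlonglongrightarrow> 0))"

definition nilpotent_alg :: "'a::ring itself \<Rightarrow> bool" where
  "nilpotent_alg _ \<longleftrightarrow> (\<exists>n>0. \<forall>xs::'a list. length xs = n \<longrightarrow> nprod xs = 0)"

end

theory Submission
  imports Defs
begin

text \<open>Nilness of the completion, applied to the constant sequence x_i, puts some power
  x_i^(k+1) into the closure of Id(A). Since the norm is multihomogeneous, projecting
  x_i^(k+1) + g, where g is an identity with N(x_i^(k+1) + g) < N(x_i^(k+1))/2, onto the
  multidegree of x_i^(k+1) shows that the coefficient of x_i^(k+1) in g is nonzero. Substituting
  x_i := \<lambda>a and all other variables := 0, and separating the powers of \<lambda> (a Vandermonde
  argument, F has characteristic 0), gives a^(k+1) = 0 for all a \<in> A. So A is nil of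
  bounded index, and the Nagata-Higman theorem makes it nilpotent: linearising
  x^(n+1) \<in> I gives \<Sum>_i x^i y x^(n-i) \<in> I, which yields x^n z y^n \<in> I; modulo the ideal
  generated by I and all n-th powers one inducts on n, doubling the length bound.\<close>

section \<open>Powers in rings without unit\<close>

text \<open>lpow x i w = x^i w and rpow x i w = w x^i are meaningful also for i = 0;
  npow x n is x^(n+1).\<close>

definition lpow :: "'a::ring \<Rightarrow> nat \<Rightarrow> 'a \<Rightarrow> 'a" where
  "lpow x i = ((*) x) ^^ i"

definition rpow :: "'a::ring \<Rightarrow> nat \<Rightarrow> 'a \<Rightarrow> 'a" where
  "rpow x i = (\<lambda>z. z * x) ^^ i"

definition npow :: "'a::ring \<Rightarrow> nat \<Rightarrow> 'a" where
  "npow x n = lpow x n x"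

lemma lpow_0 [simp]: "lpow x 0 w = w"
  by (simp add: lpow_def)

lemma rpow_0 [simp]: "rpow x 0 w = w"
  by (simp add: rpow_def)

lemma lpow_Suc: "lpow x (Suc i) w = x * lpow x i w"
  by (simp add: lpow_def)

lemma rpow_Suc: "rpow x (Suc i) w = rpow x i w * x"
  by (simp add: rpow_def)

lemma lpow_Suc_right: "lpow x (Suc i) w = lpow x i (x * w)"
  by (simp add: lpow_def funpow_Suc_right del: funpow.simps)

lemma lpow_mult: "lpow x i (a * b) = lpow x i a * b"
  by (induction i) (simp_all add: lpow_Suc mult.assoc)

lemma rpow_mult: "rpow x i (a * b) = a * rpow x i b"
  by (induction i) (simp_all add: rpow_Suc mult.assoc)

lemma rpow_mult_eq_mult_lpow: "rpow y j z * a = z * lpow y j a"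
  by (induction j arbitrary: a) (simp_all add: rpow_Suc mult.assoc lpow_Suc_right lpow_mult)

lemma lpow_rpow_commute: "lpow x i (rpow y j w) = rpow y j (lpow x i w)"
  by (induction i) (simp_all add: lpow_Suc rpow_mult)

lemma rpow_rpow: "rpow y a (rpow y b w) = rpow y (a + b) w"
  by (simp add: rpow_def funpow_add)

lemma lpow_sum: "lpow x i (sum f A) = (\<Sum>a\<in>A. lpow x i (f a))"
  by (induction i) (simp_all add: lpow_Suc sum_distrib_left)

lemma rpow_sum: "rpow x i (sum f A) = (\<Sum>a\<in>A. rpow x i (f a))"
  by (induction i) (simp_all add: rpow_Suc sum_distrib_right)

lemma npow_0 [simp]: "npow x 0 = x"
  by (simp add: npow_def)

lemma npow_Suc: "npow x (Suc k) = x * npow x k"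
  by (simp add: npow_def lpow_Suc)

lemma lpow_Suc_eq_npow_mult: "lpow x (Suc m) w = npow x m * w"
  by (simp add: npow_def lpow_Suc_right lpow_mult)

lemma rpow_Suc_eq_mult_npow: "rpow x (Suc m) w = w * npow x m"
  by (simp add: rpow_Suc rpow_mult_eq_mult_lpow npow_def)

lemma nprod_append: "xs \<noteq> [] \<Longrightarrow> ys \<noteq> [] \<Longrightarrow> nprod (xs @ ys) = nprod xs * nprod ys"
proof (induction xs rule: nprod.induct)
  case (2 x)
  then show ?case by (cases ys) auto
next
  case (3 x y xs)
  then show ?case by (simp add: mult.assoc)
qed simp

lemma nprod_split_middle:
  assumes "length xs = 2 * m + 1" and "m > 0"
  obtains as b cs where "length as = m" "length cs = m" "nprod xs = nprod as * b * nprod cs"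
proof -
  define as where "as = take m xs"
  define b where "b = xs ! m"
  define cs where "cs = drop (Suc m) xs"
  have xs: "xs = as @ [b] @ cs"
    using Cons_nth_drop_Suc[of m xs] assms(1) by (simp add: as_def b_def cs_def)
  have "length as = m" "length cs = m"
    using assms(1) by (auto simp: as_def cs_def)
  moreover from this have "as \<noteq> []" "cs \<noteq> []"
    using \<open>m > 0\<close> by auto
  then have "nprod xs = nprod as * b * nprod cs"
    by (cases cs) (simp_all add: xs nprod_append mult.assoc)
  ultimately show ?thesis by (rule that)
qed

lemma nprod_replicate: "nprod (replicate (Suc n) x) = npow x n"
  by (induction n) (simp_all add: npow_Suc)

lemma nprod_eq_0: "(0::'a::ring) \<in> set xs \<Longrightarrow> nprod xs = 0"
  by (induction xs rule: nprod.induct) auto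

text \<open>The linear part of (x + y)^(k+1) in y.\<close>

definition lin_pow :: "'a::ring \<Rightarrow> 'a \<Rightarrow> nat \<Rightarrow> 'a" where
  "lin_pow x y k = (\<Sum>i\<le>k. lpow x i (rpow x (k - i) y))"

lemma lin_pow_0 [simp]: "lin_pow x y 0 = y"
  by (simp add: lin_pow_def)

lemma lin_pow_Suc: "lin_pow x y (Suc k) = x * lin_pow x y k + y * npow x k"
proof -
  have "lin_pow x y (Suc k) = lpow x 0 (rpow x (Suc k) y)
      + (\<Sum>i\<le>k. lpow x (Suc i) (rpow x (Suc k - Suc i) y))"
    unfolding lin_pow_def by (subst sum.atMost_Suc_shift) simp
  also have "\<dots> = y * npow x k + x * lin_pow x y k"
    by (simp add: rpow_Suc_eq_mult_npow lpow_Suc lin_pow_def sum_distrib_left)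
  finally show ?thesis by (simp add: add.commute)
qed

section \<open>Algebras and their ideals\<close>

definition algebra_ideal :: "('k::field \<Rightarrow> 'a::ring \<Rightarrow> 'a) \<Rightarrow> 'a set \<Rightarrow> bool" where
  "algebra_ideal smul I \<longleftrightarrow> 0 \<in> I \<and> (\<forall>x\<in>I. \<forall>y\<in>I. x + y \<in> I) \<and> (\<forall>x\<in>I. - x \<in> I)
     \<and> (\<forall>x\<in>I. \<forall>a. a * x \<in> I \<and> x * a \<in> I) \<and> (\<forall>x\<in>I. \<forall>c. smul c x \<in> I)"

lemma algebra_idealI:
  assumes "0 \<in> I" "\<And>a b. a \<in> I \<Longrightarrow> b \<in> I \<Longrightarrow> a + b \<in> I" "\<And>a. a \<in> I \<Longrightarrow> - a \<in> I"
    "\<And>a b. a \<in> I \<Longrightarrow> b * a \<in> I" "\<And>a b. a \<in> I \<Longrightarrow> a * b \<in> I"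
    "\<And>a c. a \<in> I \<Longrightarrow> smul c a \<in> I"
  shows "algebra_ideal smul I"
  unfolding algebra_ideal_def by (intro conjI ballI allI) (simp_all add: assms)

lemma
  assumes "algebra_ideal smul I"
  shows algebra_ideal_zero: "0 \<in> I"
    and algebra_ideal_add: "x \<in> I \<Longrightarrow> y \<in> I \<Longrightarrow> x + y \<in> I"
    and algebra_ideal_uminus: "x \<in> I \<Longrightarrow> - x \<in> I"
    and algebra_ideal_mult_left: "x \<in> I \<Longrightarrow> a * x \<in> I"
    and algebra_ideal_mult_right: "x \<in> I \<Longrightarrow> x * a \<in> I"
    and algebra_ideal_smul: "x \<in> I \<Longrightarrow> smul c x \<in> I"
  using assms unfolding algebra_ideal_def by simp_all

lemma algebra_ideal_sum:
  "algebra_ideal smul I \<Longrightarrow> (\<And>i. i \<in> S \<Longrightarrow> f i \<in> I) \<Longrightarrow> sum f S \<in> I"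
  by (induction S rule: infinite_finite_induct)
     (auto intro: algebra_ideal_zero algebra_ideal_add)

lemma algebra_ideal_diff:
  "algebra_ideal smul I \<Longrightarrow> x \<in> I \<Longrightarrow> y \<in> I \<Longrightarrow> x - y \<in> I"
  by (metis algebra_ideal_add algebra_ideal_uminus diff_conv_add_uminus)

lemma algebra_ideal_lpow: "algebra_ideal smul I \<Longrightarrow> w \<in> I \<Longrightarrow> lpow x i w \<in> I"
  by (induction i) (auto simp: lpow_Suc intro: algebra_ideal_mult_left)

lemma algebra_ideal_rpow: "algebra_ideal smul I \<Longrightarrow> w \<in> I \<Longrightarrow> rpow x i w \<in> I"
  by (induction i) (auto simp: rpow_Suc intro: algebra_ideal_mult_right)

definition ideal_hull :: "('k::field \<Rightarrow> 'a::ring \<Rightarrow> 'a) \<Rightarrow> 'a set \<Rightarrow> 'a set" where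
  "ideal_hull smul S = \<Inter>{K. algebra_ideal smul K \<and> S \<subseteq> K}"

lemma algebra_ideal_ideal_hull: "algebra_ideal smul (ideal_hull smul S)"
  unfolding ideal_hull_def algebra_ideal_def by blast

lemma ideal_hull_subset: "S \<subseteq> ideal_hull smul S"
  unfolding ideal_hull_def by blast

lemma ideal_hull_minimal: "algebra_ideal smul K \<Longrightarrow> S \<subseteq> K \<Longrightarrow> ideal_hull smul S \<subseteq> K"
  unfolding ideal_hull_def by blast

locale scalar_algebra =
  fixes smul :: "'k::field_char_0 \<Rightarrow> 'a::ring \<Rightarrow> 'a"
  assumes is_algebra: "is_algebra smul"
begin

lemma smul_add_right: "smul c (x + y) = smul c x + smul c y"
  using is_algebra by (simp add: is_algebra_def)

lemma smul_add_left: "smul (c + d) x = smul c x + smul d x"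
  using is_algebra by (simp add: is_algebra_def)

lemma smul_smul: "smul c (smul d x) = smul (c * d) x"
  using is_algebra by (simp add: is_algebra_def)

lemma smul_one [simp]: "smul 1 x = x"
  using is_algebra by (simp add: is_algebra_def)

lemma smul_mult_left: "smul c (x * y) = smul c x * y"
  using is_algebra by (simp add: is_algebra_def)

lemma smul_mult_right: "smul c (x * y) = x * smul c y"
  using is_algebra unfolding is_algebra_def by metis

lemma smul_zero_left [simp]: "smul 0 x = 0"
  using smul_add_left[of 0 0 x] by simp

lemma smul_zero_right [simp]: "smul c 0 = 0"
  using smul_add_right[of c 0 0] by simp

lemma smul_minus_left: "smul (- c) x = - smul c x"
  using smul_add_left[of c "- c" x] by (simp add: eq_neg_iff_add_eq_0 add.commute)

lemma smul_diff_left: "smul (c - d) x = smul c x - smul d x"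
  using smul_add_left[of c "- d" x] by (simp add: smul_minus_left)

lemma smul_sum_right: "smul c (sum f S) = (\<Sum>i\<in>S. smul c (f i))"
  by (induction S rule: infinite_finite_induct) (simp_all add: smul_add_right)

lemma smul_inverse_cancel: "c \<noteq> 0 \<Longrightarrow> smul (inverse c) (smul c x) = x"
  by (simp add: smul_smul)

lemma sum_const_eq_smul: "(\<Sum>j\<le>n. t) = smul (of_nat (Suc n)) t"
proof (induction n)
  case (Suc n)
  have "of_nat (Suc (Suc n)) = (of_nat (Suc n) + 1 :: 'k)" by simp
  then show ?case using Suc.IH by (simp only: sum.atMost_Suc smul_add_left smul_one)
qed simp

lemma npow_smul: "npow (smul l a) n = smul (l ^ Suc n) (npow a n)"
  by (induction n)
     (simp_all add: npow_Suc smul_mult_left[symmetric] smul_mult_right[symmetric] smul_smul mult.commute)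

lemma algebra_ideal_smul_cancel:
  "algebra_ideal smul I \<Longrightarrow> c \<noteq> 0 \<Longrightarrow> smul c x \<in> I \<Longrightarrow> x \<in> I"
  by (metis algebra_ideal_smul smul_inverse_cancel)

lemma smul_poly_double_minus_scaled:
  "(\<Sum>m\<le>Suc D. smul ((2 * l) ^ m) (c m)) - smul (2 ^ Suc D) (\<Sum>m\<le>Suc D. smul (l ^ m) (c m))
     = (\<Sum>m\<le>D. smul (l ^ m) (smul (2 ^ m - 2 ^ Suc D) (c m)))"
proof -
  have termwise: "smul ((2 * l) ^ m) (c m) - smul (2 ^ Suc D) (smul (l ^ m) (c m))
      = smul (l ^ m) (smul (2 ^ m - 2 ^ Suc D) (c m))" for m
    by (simp add: smul_smul smul_diff_left[symmetric] algebra_simps)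
  have "(\<Sum>m\<le>Suc D. smul ((2 * l) ^ m) (c m)) - smul (2 ^ Suc D) (\<Sum>m\<le>Suc D. smul (l ^ m) (c m))
      = (\<Sum>m\<le>Suc D. smul (l ^ m) (smul (2 ^ m - 2 ^ Suc D) (c m)))"
    by (simp only: smul_sum_right sum_subtractf[symmetric] termwise)
  then show ?thesis by simp
qed

text \<open>Induction on D: the values at 2\<lambda> and \<lambda> combine into a polynomial of lower
  degree whose coefficients are the nonzero multiples (2^m - 2^(D+1)) c m; the top
  coefficient is then the value at 1 minus the others.\<close>

lemma algebra_ideal_poly_coeff:
  assumes I: "algebra_ideal smul I"
    and poly: "\<And>l. (\<Sum>m\<le>D. smul (l ^ m) (c m)) \<in> I" and "m \<le> D"
  shows "c m \<in> I"
  using poly \<open>m \<le> D\<close>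
proof (induction D arbitrary: c m)
  case 0
  then show ?case using "0.prems"(1)[of 1] by simp
next
  case (Suc D)
  have "(\<Sum>m\<le>D. smul (l ^ m) (smul (2 ^ m - 2 ^ Suc D) (c m))) \<in> I" for l
    unfolding smul_poly_double_minus_scaled[symmetric]
    by (intro algebra_ideal_diff[OF I] algebra_ideal_smul[OF I] Suc.prems(1))
  then have scaled_mem: "smul (2 ^ m - 2 ^ Suc D) (c m) \<in> I" if "m \<le> D" for m
    using Suc.IH[of "\<lambda>m. smul (2 ^ m - 2 ^ Suc D) (c m)"] that by blast
  have c_mem: "c m \<in> I" if "m \<le> D" for m
  proof (rule algebra_ideal_smul_cancel[OF I _ scaled_mem[OF that]])
    have "(2::nat) ^ m < 2 ^ Suc D"
      using that by (intro power_strict_increasing) auto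
    then have "of_nat (2 ^ m) \<noteq> (of_nat (2 ^ Suc D) :: 'k)"
      by (simp only: of_nat_eq_iff)
    then show "(2::'k) ^ m - 2 ^ Suc D \<noteq> 0" by simp
  qed
  show ?case
  proof (cases "m = Suc D")
    case True
    have "(\<Sum>m\<le>Suc D. c m) - (\<Sum>m\<le>D. c m) \<in> I"
      using Suc.prems(1)[of 1] c_mem
      by (intro algebra_ideal_diff[OF I] algebra_ideal_sum[OF I, of "{..D}"]) auto
    then show ?thesis using True by simp
  next
    case False
    then show ?thesis using c_mem Suc.prems(2) by simp
  qed
qed

lemma npow_add_smul_expansion:
  "\<exists>c. (\<forall>l. npow (x + smul l y) k = (\<Sum>m\<le>Suc k. smul (l ^ m) (c m)))
     \<and> c 0 = npow x k \<and> c 1 = lin_pow x y k \<and> (\<forall>m>Suc k. c m = 0)"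
proof (induction k)
  case 0
  show ?case
    by (rule exI[of _ "\<lambda>m. if m = 0 then x else if m = 1 then y else 0"]) simp
next
  case (Suc k)
  then obtain c where c: "\<And>l. npow (x + smul l y) k = (\<Sum>m\<le>Suc k. smul (l ^ m) (c m))"
    "c 0 = npow x k" "c 1 = lin_pow x y k" "\<And>m. m > Suc k \<Longrightarrow> c m = 0"
    by blast
  define c' where "c' m = x * c m + (if m = 0 then 0 else y * c (m - 1))" for m
  have "npow (x + smul l y) (Suc k) = (\<Sum>m\<le>Suc (Suc k). smul (l ^ m) (c' m))" for l
  proof -
    have "npow (x + smul l y) (Suc k)
        = x * (\<Sum>m\<le>Suc k. smul (l ^ m) (c m)) + smul l (y * (\<Sum>m\<le>Suc k. smul (l ^ m) (c m)))"
      by (simp only: npow_Suc c(1) distrib_right smul_mult_left[symmetric])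
    also have "\<dots> = (\<Sum>m\<le>Suc k. smul (l ^ m) (x * c m))
        + (\<Sum>m\<le>Suc k. smul (l ^ Suc m) (y * c m))"
      by (simp only: sum_distrib_left smul_sum_right smul_mult_right[symmetric] smul_smul power_Suc)
    also have "(\<Sum>m\<le>Suc k. smul (l ^ m) (x * c m)) = (\<Sum>m\<le>Suc (Suc k). smul (l ^ m) (x * c m))"
      using c(4)[of "Suc (Suc k)"] by simp
    also have "(\<Sum>m\<le>Suc k. smul (l ^ Suc m) (y * c m))
        = (\<Sum>m\<le>Suc (Suc k). smul (l ^ m) (if m = 0 then 0 else y * c (m - 1)))"
      by (subst sum.atMost_Suc_shift) simp
    finally show ?thesis
      by (simp add: c'_def smul_add_right sum.distrib)
  qed
  moreover have "c' 0 = npow x (Suc k)"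
    by (simp add: c'_def c(2) npow_Suc)
  moreover have "c' 1 = lin_pow x y (Suc k)"
    using c(2,3) by (simp add: c'_def lin_pow_Suc)
  moreover have "\<forall>m>Suc (Suc k). c' m = 0"
    by (simp add: c'_def c(4))
  ultimately show ?case by blast
qed

lemma lin_pow_mem_ideal:
  assumes I: "algebra_ideal smul I" and nil: "\<And>x. npow x k \<in> I"
  shows "lin_pow x y k \<in> I"
proof -
  obtain c where expansion: "\<And>l. npow (x + smul l y) k = (\<Sum>m\<le>Suc k. smul (l ^ m) (c m))"
    and "c 1 = lin_pow x y k"
    using npow_add_smul_expansion by blast
  have "c 1 \<in> I"
  proof (rule algebra_ideal_poly_coeff[OF I, where D="Suc k"])
    show "(\<Sum>m\<le>Suc k. smul (l ^ m) (c m)) \<in> I" for l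
      using nil[of "x + smul l y"] by (simp add: expansion)
  qed simp
  then show ?thesis using \<open>c 1 = lin_pow x y k\<close> by simp
qed

text \<open>Summing lin_pow x (y^j z) k y^(k-j) over j gives \<Sum>_i,j x^i z y^j x^(k-i) y^(k-j);
  for fixed i < k the inner sum is x^i z lin_pow y (x^(k-i)) k, and the terms with
  i = k add up to (k+1) x^k z y^k.\<close>

lemma lpow_rpow_mem_ideal:
  assumes I: "algebra_ideal smul I" and lin: "\<And>x y. lin_pow x y k \<in> I"
  shows "lpow x k (rpow y k z) \<in> I"
proof -
  define T where "T i j = lpow x i (rpow y (k - j) (rpow x (k - i) (rpow y j z)))" for i j
  define t where "t = lpow x k (rpow y k z)"
  have "(\<Sum>j\<le>k. rpow y (k - j) (lin_pow x (rpow y j z) k)) = (\<Sum>j\<le>k. \<Sum>i\<le>k. T i j)"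
    by (simp add: lin_pow_def rpow_sum T_def lpow_rpow_commute)
  also have "\<dots> = (\<Sum>i\<le>k. \<Sum>j\<le>k. T i j)"
    by (rule sum.swap)
  also have "\<dots> = (\<Sum>i<k. \<Sum>j\<le>k. T i j) + (\<Sum>j\<le>k. T k j)"
    by (simp only: lessThan_Suc_atMost[symmetric] sum.lessThan_Suc)
  also have "(\<Sum>j\<le>k. T k j) = (\<Sum>j\<le>k. t)"
    by (rule sum.cong) (simp_all add: T_def t_def rpow_rpow)
  also have "\<dots> = smul (of_nat (Suc k)) t"
    by (rule sum_const_eq_smul)
  finally have split: "(\<Sum>j\<le>k. rpow y (k - j) (lin_pow x (rpow y j z) k))
      = (\<Sum>i<k. \<Sum>j\<le>k. T i j) + smul (of_nat (Suc k)) t" .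
  have lower: "(\<Sum>i<k. \<Sum>j\<le>k. T i j) \<in> I"
  proof (rule algebra_ideal_sum[OF I])
    fix i assume "i \<in> {..<k}"
    then obtain p where p: "k - i = Suc p"
      by (metis lessThan_iff zero_less_diff Suc_pred)
    have "T i j = lpow x i (z * lpow y j (rpow y (k - j) (npow x p)))" for j
      by (simp add: T_def p rpow_Suc_eq_mult_npow rpow_mult_eq_mult_lpow rpow_mult lpow_rpow_commute)
    then have "(\<Sum>j\<le>k. T i j) = lpow x i (z * lin_pow y (npow x p) k)"
      by (simp add: lin_pow_def lpow_sum sum_distrib_left)
    then show "(\<Sum>j\<le>k. T i j) \<in> I"
      using lin by (simp add: algebra_ideal_lpow[OF I] algebra_ideal_mult_left[OF I])
  qed
  have "(\<Sum>j\<le>k. rpow y (k - j) (lin_pow x (rpow y j z) k)) \<in> I"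
    using lin by (intro algebra_ideal_sum[OF I] algebra_ideal_rpow[OF I])
  then have "(\<Sum>i<k. \<Sum>j\<le>k. T i j) + smul (of_nat (Suc k)) t - (\<Sum>i<k. \<Sum>j\<le>k. T i j) \<in> I"
    unfolding split by (rule algebra_ideal_diff[OF I _ lower])
  then have "smul (of_nat (Suc k)) t \<in> I"
    by (simp only: add_diff_cancel_left')
  then show ?thesis
    unfolding t_def by (rule algebra_ideal_smul_cancel[OF I, rotated]) (rule of_nat_neq_0)
qed

lemma npow_mult_npow_mem_ideal:
  assumes I: "algebra_ideal smul I" and nil: "\<And>x. npow x (Suc k) \<in> I"
  shows "npow x k * z * npow y k \<in> I"
  using lpow_rpow_mem_ideal[OF I lin_pow_mem_ideal[OF I nil], of x y z]
  by (simp add: lpow_Suc_eq_npow_mult rpow_Suc_eq_mult_npow mult.assoc)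

lemma algebra_ideal_sandwich_right:
  assumes I: "algebra_ideal smul I"
  shows "algebra_ideal smul {w. \<forall>u\<in>S. \<forall>v. u * v * w \<in> I}"
proof (rule algebra_idealI; unfold mem_Collect_eq)
  show "\<forall>u\<in>S. \<forall>v. u * v * 0 \<in> I"
    using algebra_ideal_zero[OF I] by simp
  show "\<forall>u\<in>S. \<forall>v. u * v * (a + b) \<in> I"
    if "\<forall>u\<in>S. \<forall>v. u * v * a \<in> I" "\<forall>u\<in>S. \<forall>v. u * v * b \<in> I" for a b
    using that algebra_ideal_add[OF I] by (simp add: distrib_left)
  show "\<forall>u\<in>S. \<forall>v. u * v * - a \<in> I" if "\<forall>u\<in>S. \<forall>v. u * v * a \<in> I" for a
    using that algebra_ideal_uminus[OF I] by simp
  show "\<forall>u\<in>S. \<forall>v. u * v * (b * a) \<in> I" if "\<forall>u\<in>S. \<forall>v. u * v * a \<in> I" for a b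
    using that by (metis mult.assoc)
  show "\<forall>u\<in>S. \<forall>v. u * v * (a * b) \<in> I" if "\<forall>u\<in>S. \<forall>v. u * v * a \<in> I" for a b
    using that algebra_ideal_mult_right[OF I] by (metis mult.assoc)
  show "\<forall>u\<in>S. \<forall>v. u * v * smul c a \<in> I" if "\<forall>u\<in>S. \<forall>v. u * v * a \<in> I" for a c
    using that algebra_ideal_smul[OF I] by (metis smul_mult_right)
qed

lemma algebra_ideal_sandwich_left:
  assumes I: "algebra_ideal smul I"
  shows "algebra_ideal smul {u. \<forall>w\<in>T. \<forall>v. u * v * w \<in> I}"
proof (rule algebra_idealI; unfold mem_Collect_eq)
  show "\<forall>w\<in>T. \<forall>v. 0 * v * w \<in> I"
    using algebra_ideal_zero[OF I] by simp
  show "\<forall>w\<in>T. \<forall>v. (a + b) * v * w \<in> I"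
    if "\<forall>w\<in>T. \<forall>v. a * v * w \<in> I" "\<forall>w\<in>T. \<forall>v. b * v * w \<in> I" for a b
    using that algebra_ideal_add[OF I] by (simp add: distrib_right)
  show "\<forall>w\<in>T. \<forall>v. - a * v * w \<in> I" if "\<forall>w\<in>T. \<forall>v. a * v * w \<in> I" for a
    using that algebra_ideal_uminus[OF I] by simp
  show "\<forall>w\<in>T. \<forall>v. b * a * v * w \<in> I" if "\<forall>w\<in>T. \<forall>v. a * v * w \<in> I" for a b
    using that algebra_ideal_mult_left[OF I] by (metis mult.assoc)
  show "\<forall>w\<in>T. \<forall>v. a * b * v * w \<in> I" if "\<forall>w\<in>T. \<forall>v. a * v * w \<in> I" for a b
    using that by (metis mult.assoc)
  show "\<forall>w\<in>T. \<forall>v. smul c a * v * w \<in> I" if "\<forall>w\<in>T. \<forall>v. a * v * w \<in> I" for a c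
    using that algebra_ideal_smul[OF I] by (metis smul_mult_left)
qed

text \<open>Both u v w \<in> I for fixed u and for fixed w are ideal conditions, so it suffices to
  check them on generators, where npow_mult_npow_mem_ideal applies.\<close>

lemma ideal_hull_npow_sandwich:
  assumes I: "algebra_ideal smul I" and nil: "\<And>x. npow x (Suc k) \<in> I"
    and u: "u \<in> ideal_hull smul (I \<union> range (\<lambda>x. npow x k))"
    and w: "w \<in> ideal_hull smul (I \<union> range (\<lambda>x. npow x k))"
  shows "u * v * w \<in> I"
proof -
  define J where "J = ideal_hull smul (I \<union> range (\<lambda>x. npow x k))"
  have J_minimal: "J \<subseteq> K" if "algebra_ideal smul K" "I \<union> range (\<lambda>x. npow x k) \<subseteq> K" for K
    unfolding J_def using that by (rule ideal_hull_minimal)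
  have "I \<union> range (\<lambda>x. npow x k) \<subseteq> {w. \<forall>u\<in>range (\<lambda>x. npow x k). \<forall>v. u * v * w \<in> I}"
    using npow_mult_npow_mem_ideal[OF I nil] algebra_ideal_mult_left[OF I] by blast
  then have "J \<subseteq> {w. \<forall>u\<in>range (\<lambda>x. npow x k). \<forall>v. u * v * w \<in> I}"
    by (rule J_minimal[OF algebra_ideal_sandwich_right[OF I]])
  then have "I \<union> range (\<lambda>x. npow x k) \<subseteq> {u. \<forall>w\<in>J. \<forall>v. u * v * w \<in> I}"
    using algebra_ideal_mult_right[OF I] by blast
  then have "J \<subseteq> {u. \<forall>w\<in>J. \<forall>v. u * v * w \<in> I}"
    by (rule J_minimal[OF algebra_ideal_sandwich_left[OF I]])
  then show ?thesis
    using u w unfolding J_def by blast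
qed

theorem nagata_higman:
  assumes "algebra_ideal smul I" and "\<And>x. npow x k \<in> I"
  shows "\<exists>m>0. \<forall>xs. length xs = m \<longrightarrow> nprod xs \<in> I"
  using assms
proof (induction k arbitrary: I)
  case 0
  have "nprod xs \<in> I" if "length xs = 1" for xs
    using that "0.prems"(2) by (cases xs) auto
  then show ?case by blast
next
  case (Suc k)
  let ?J = "ideal_hull smul (I \<union> range (\<lambda>x. npow x k))"
  have "npow x k \<in> ?J" for x
    using ideal_hull_subset[of "I \<union> range (\<lambda>x. npow x k)" smul] by blast
  then obtain m where "m > 0" and m: "\<And>xs. length xs = m \<Longrightarrow> nprod xs \<in> ?J"
    using Suc.IH[OF algebra_ideal_ideal_hull] by blast
  have "nprod xs \<in> I" if len: "length xs = 2 * m + 1" for xs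
  proof -
    obtain as b cs where "length as = m" "length cs = m" "nprod xs = nprod as * b * nprod cs"
      using nprod_split_middle[OF len \<open>m > 0\<close>] by blast
    then show ?thesis
      using ideal_hull_npow_sandwich[OF Suc.prems] m by simp
  qed
  then show ?case by (intro exI[of _ "2 * m + 1"]) auto
qed
end

section \<open>Polynomials\<close>

definition pvar :: "nat \<Rightarrow> nat list \<Rightarrow> 'k::comm_semiring_1" where
  "pvar i w = (if w = [i] then 1 else 0)"

lemma pmul_pvar:
  "pmul (pvar i) f w = (case w of [] \<Rightarrow> 0 | a # w' \<Rightarrow> if a = i then f w' else 0)"
proof (cases w)
  case Nil
  then show ?thesis by (simp add: pmul_def pvar_def)
next
  case (Cons a w')
  have "pmul (pvar i) f w = pvar i (take 0 w) * f (drop 0 w)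
      + (\<Sum>j\<le>length w'. pvar i (take (Suc j) w) * f (drop (Suc j) w))"
    unfolding pmul_def Cons length_Cons by (rule sum.atMost_Suc_shift)
  also have "\<dots> = (\<Sum>j\<le>length w'. if j = 0 then (if a = i then f w' else 0) else 0)"
  proof -
    have "pvar i (take (Suc j) w) * f (drop (Suc j) w) = (if j = 0 then (if a = i then f w' else 0) else 0)"
      if "j \<le> length w'" for j
      using that by (cases w') (auto simp: pvar_def Cons)
    then show ?thesis by (simp add: pvar_def Cons)
  qed
  finally show ?thesis by (simp add: Cons)
qed

lemma ppow_pvar: "ppow (pvar i) k = (\<lambda>w. if w = replicate (Suc k) i then 1 else 0)"
proof (induction k)
  case 0
  show ?case by (auto simp: pvar_def)
next
  case (Suc k)
  show ?case
    by (rule ext, simp only: ppow.simps, subst pmul_pvar) (auto simp: Suc.IH split: list.split)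
qed

lemma FX_zero: "(\<lambda>_. 0) \<in> FX"
  by (simp add: FX_def)

lemma FX_padd: "(f :: nat list \<Rightarrow> 'k::monoid_add) \<in> FX \<Longrightarrow> g \<in> FX \<Longrightarrow> padd f g \<in> FX"
  unfolding FX_def padd_def
  by (auto intro: finite_subset[of _ "{w. f w \<noteq> 0} \<union> {w. g w \<noteq> 0}"])

lemma ppow_pvar_FX: "ppow (pvar i) k \<in> FX"
  unfolding FX_def ppow_pvar by (auto intro: finite_subset[of _ "{replicate (Suc k) i}"])

lemma count_list_replicate: "count_list (replicate n x) y = (if y = x then n else 0)"
  by (induction n) auto

lemma multidegree_eq_replicate_iff:
  "(\<forall>j. count_list w j = (if j = i then Suc k else 0)) \<longleftrightarrow> w = replicate (Suc k) i"
proof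
  assume deg: "\<forall>j. count_list w j = (if j = i then Suc k else 0)"
  then have "\<forall>x\<in>set w. x = i"
    by (metis count_list_0_iff)
  then have "w = replicate (length w) i"
    by (simp add: replicate_length_same)
  moreover from this have "length w = Suc k"
    using deg by (metis count_list_replicate)
  ultimately show "w = replicate (Suc k) i" by simp
qed (simp add: count_list_replicate)

lemma mhcomp_padd_ppow_pvar:
  "mhcomp (\<lambda>j. if j = i then Suc k else 0) (padd (ppow (pvar i) k) g)
     = pscale (1 + g (replicate (Suc k) i)) (ppow (pvar i) k)"
  by (rule ext) (auto simp: mhcomp_def pscale_def padd_def ppow_pvar multidegree_eq_replicate_iff)

text \<open>The constant sequence x_i is Cauchy, so some power of it has quotient norm 0.\<close>

lemma completion_nil_imp_qnorm_ppow_pvar_eq_0: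
  assumes MN: "MN_norm N" and nil: "completion_nil N I" and zero: "(\<lambda>_. 0) \<in> I" and "I \<subseteq> FX"
  shows "\<exists>k. qnorm N I (ppow (pvar i) k) = 0"
proof -
  have "qnorm N I (\<lambda>_. 0) \<le> N (padd (\<lambda>_. 0) (\<lambda>_. 0))"
    unfolding qnorm_def
  proof (rule cINF_lower[OF _ zero], rule bdd_belowI2[of _ 0])
    show "0 \<le> N (padd (\<lambda>_. 0) g)" if "g \<in> I" for g
      using MN that \<open>I \<subseteq> FX\<close> FX_zero FX_padd unfolding MN_norm_def by blast
  qed
  also have "\<dots> = 0"
    using MN FX_zero unfolding MN_norm_def padd_def by auto
  finally have "qnorm N I (psub (pvar i) (pvar i)) \<le> 0"
    by (simp add: psub_def)
  then obtain k where "(\<lambda>n. qnorm N I (ppow (pvar i) k)) \<longlonglongrightarrow> 0"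
    using nil ppow_pvar_FX[of i 0] unfolding completion_nil_def by force
  then show ?thesis
    by (auto simp: LIMSEQ_const_iff)
qed

text \<open>A polynomial of quotient norm 0 is within N P / 2 of I; the multihomogeneous
  projection then bounds |1 + g(x_i^(k+1))| by 1/2.\<close>

lemma qnorm_ppow_pvar_eq_0_imp_coeff:
  fixes N :: "(nat list \<Rightarrow> 'k::real_normed_field) \<Rightarrow> real"
  assumes MN: "MN_norm N" and "I \<noteq> {}" "I \<subseteq> FX" and q0: "qnorm N I (ppow (pvar i) k) = 0"
  shows "\<exists>g\<in>I. g (replicate (Suc k) i) \<noteq> 0"
proof -
  define P :: "nat list \<Rightarrow> 'k" where "P = ppow (pvar i) k"
  have PFX: "P \<in> FX" by (simp add: P_def ppow_pvar_FX)
  have "P \<noteq> (\<lambda>_. 0)"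
    unfolding P_def ppow_pvar by (metis zero_neq_one)
  then have NP: "N P > 0"
    using MN PFX unfolding MN_norm_def by (metis order.not_eq_order_implies_strict)
  have bdd: "bdd_below ((\<lambda>g. N (padd P g)) ` I)"
    using MN \<open>I \<subseteq> FX\<close> PFX FX_padd unfolding MN_norm_def
    by (intro bdd_belowI2[of _ 0]) blast
  have "(INF g\<in>I. N (padd P g)) < N P / 2"
    using q0 NP by (simp add: qnorm_def P_def)
  then obtain g where gI: "g \<in> I" and g: "N (padd P g) < N P / 2"
    using cINF_less_iff[OF \<open>I \<noteq> {}\<close> bdd] by blast
  have "norm (1 + g (replicate (Suc k) i)) * N P \<le> N (padd P g)"
    using MN PFX gI \<open>I \<subseteq> FX\<close> FX_padd mhcomp_padd_ppow_pvar[of i k g]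
    unfolding MN_norm_def P_def by (metis subsetD)
  then have "norm (1 + g (replicate (Suc k) i)) * N P < 1 / 2 * N P"
    using g by simp
  then have "norm (1 + g (replicate (Suc k) i)) < 1 / 2"
    using NP by simp
  then have "g (replicate (Suc k) i) \<noteq> 0" by auto
  then show ?thesis using gI by blast
qed

lemma (in scalar_algebra) peval_single_variable:
  assumes "g \<in> FX" and bound: "\<And>m. g (replicate m i) \<noteq> 0 \<Longrightarrow> m \<le> D"
  shows "peval smul (\<lambda>j. if j = i then b else 0) g
    = (\<Sum>m\<le>D. smul (g (replicate m i)) (nprod (replicate m b)))"
proof -
  define S where "S = {w. g w \<noteq> 0}"
  define T where "T w = smul (g w) (nprod (map (\<lambda>j. if j = i then b else 0) w))" for w
  define rp where "rp m = replicate m i" for m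
  define M where "M = rp -` S"
  have "finite S"
    using \<open>g \<in> FX\<close> by (simp add: FX_def S_def)
  have inj: "inj rp"
    unfolding rp_def by (metis injI length_replicate)
  have "peval smul (\<lambda>j. if j = i then b else 0) g = sum T S"
    by (simp add: peval_def T_def S_def)
  also have "\<dots> = sum T (rp ` M)"
  proof (rule sum.mono_neutral_right[OF \<open>finite S\<close>])
    show "rp ` M \<subseteq> S" by (auto simp: M_def)
    show "\<forall>w\<in>S - rp ` M. T w = 0"
    proof
      fix w assume "w \<in> S - rp ` M"
      then have "w \<noteq> rp (length w)"
        unfolding M_def by (metis DiffE image_eqI vimageI)
      then have "\<exists>x\<in>set w. x \<noteq> i"
        using replicate_length_same[of w i] by (auto simp: rp_def)
      then have "0 \<in> set (map (\<lambda>j. if j = i then b else 0) w)" by force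
      then show "T w = 0" by (simp add: T_def nprod_eq_0)
    qed
  qed
  also have "\<dots> = sum (T \<circ> rp) M"
    using inj by (simp add: sum.reindex inj_on_subset)
  also have "\<dots> = sum (T \<circ> rp) {..D}"
    using bound by (intro sum.mono_neutral_left) (auto simp: M_def S_def rp_def T_def)
  finally show ?thesis
    by (simp add: T_def rp_def)
qed

lemma (in scalar_algebra) identity_coeff_imp_npow_eq_0:
  fixes a :: 'a
  assumes g: "g \<in> Id_alg smul" and coeff: "g (replicate (Suc k) i) \<noteq> 0"
  shows "npow a k = 0"
proof -
  have "g \<in> FX" and g_id: "\<And>\<phi>. peval smul \<phi> g = 0"
    using g by (auto simp: Id_alg_def)
  have "finite ((\<lambda>m. replicate m i) -` {w. g w \<noteq> 0})"
    using \<open>g \<in> FX\<close> by (intro finite_vimageI) (auto simp: FX_def inj_def)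
  then obtain D where D: "\<And>m. g (replicate m i) \<noteq> 0 \<Longrightarrow> m \<le> D"
    by (auto simp: finite_nat_set_iff_bounded_le)
  define c where "c m = smul (g (replicate m i)) (npow a (m - 1))" for m
  have "(\<Sum>m\<le>D. smul (l ^ m) (c m)) \<in> {0}" for l
  proof -
    have "smul (g (replicate m i)) (nprod (replicate m (smul l a))) = smul (l ^ m) (c m)" for m
    proof (cases m)
      case 0
      then show ?thesis using \<open>g \<in> FX\<close> by (simp add: FX_def c_def)
    next
      case (Suc n)
      then have "nprod (replicate m (smul l a)) = smul (l ^ m) (npow a n)"
        by (simp only: nprod_replicate npow_smul)
      then show ?thesis by (simp add: Suc c_def smul_smul mult.commute)
    qed
    then show ?thesis
      using g_id[of "\<lambda>j. if j = i then smul l a else 0"]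
      by (simp add: peval_single_variable[OF \<open>g \<in> FX\<close> D])
  qed
  moreover have "algebra_ideal smul {0}"
    by (simp add: algebra_ideal_def)
  ultimately have "c (Suc k) \<in> {0}"
    using D[OF coeff] algebra_ideal_poly_coeff[of "{0}" c D "Suc k"] by blast
  then show ?thesis
    using coeff smul_inverse_cancel[of "g (replicate (Suc k) i)" "npow a k"] by (simp add: c_def)
qed

theorem corollary1p6:
  fixes N :: "(nat list \<Rightarrow> 'k::{real_normed_field,banach}) \<Rightarrow> real"
    and smul :: "'k \<Rightarrow> 'a::ring \<Rightarrow> 'a"
  assumes "MN_norm N"
    and "is_algebra smul"
    and "is_PI smul"
    and "completion_nil N (Id_alg smul)"
  shows "nilpotent_alg TYPE('a)"
proof -
  interpret scalar_algebra smul
    by unfold_locales (rule assms(2))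
  have zero: "(\<lambda>_. 0) \<in> Id_alg smul" and "Id_alg smul \<subseteq> FX"
    by (auto simp: Id_alg_def FX_zero peval_def)
  then obtain k where "qnorm N (Id_alg smul) (ppow (pvar 0) k) = 0"
    using completion_nil_imp_qnorm_ppow_pvar_eq_0[OF assms(1,4)] by blast
  then obtain g where "g \<in> Id_alg smul" "g (replicate (Suc k) 0) \<noteq> 0"
    using qnorm_ppow_pvar_eq_0_imp_coeff[OF assms(1) _ \<open>Id_alg smul \<subseteq> FX\<close>] zero by blast
  then have "npow a k \<in> {0}" for a :: 'a
    using identity_coeff_imp_npow_eq_0 by blast
  then obtain m where "m > 0" "\<forall>xs::'a list. length xs = m \<longrightarrow> nprod xs \<in> {0}"
    using nagata_higman[of "{0}" k] by (auto simp: algebra_ideal_def)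
  then show ?thesis
    unfolding nilpotent_alg_def by auto
qed

end
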